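(* Let $\mathcal{G}$ be a connected $k$-uniform hypergraph with $n$ vertices. Then for every $j\in V(\mathcal{G})$, \[ {\rm ecc}(j)\geq \frac{k}{2(k-1)(n-1)\alpha_j(\mathcal{G})}. \]
   Context: A $k$-uniform hypergraph $\mathcal{G}$ has vertex set $V(\mathcal{G})=[n]$ and edge set $E(\mathcal{G})$ of $k$-element subsets of $V(\mathcal{G})$. A path of length $l$ is an alternating sequence $v_0e_1v_1\cdots e_lv_l$ of distinct vertices and distinct edges with $v_{i-1},v_i\in e_i$; $\mathcal{G}$ is connected if any two vertices are joined by a path. The distance $d(u,v)$ is the length of a shortest path between $u$ and $v$, and ${\rm ecc}(v)=\max_{u\in V(\mathcal{G})}d(u,v)$. For $\mathbf{x}\in\mathbb{R}^n$, $\mathcal{L}_\mathcal{G}\mathbf{x}^k=\sum_{\{i_1,\ldots,i_k\}\in E(\mathcal{G})}\left(x_{i_1}^k+\cdots+x_{i_k}^k-k\,x_{i_1}\cdots x_{i_k}\right)$, and the inverse Perron value of vertex $j$ is $\alpha_j(\mathcal{G})=\min\{\mathcal{L}_\mathcal{G}\mathbf{x}^k : \mathbf{x}\in\mathbb{R}^n_+,\ \sum_{i=1}^n x_i^k=1,\ x_j=0\}$. *)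

theory Defs
  imports "HOL-Analysis.Analysis"
begin

definition uniform_hypergraph :: "nat \<Rightarrow> nat \<Rightarrow> nat set set \<Rightarrow> bool" where
  "uniform_hypergraph n k E \<longleftrightarrow> k \<ge> 2 \<and> (\<forall>e\<in>E. e \<subseteq> {1..n} \<and> card e = k)"

definition is_path :: "nat set set \<Rightarrow> nat list \<Rightarrow> nat set list \<Rightarrow> bool" where
  "is_path E vs es \<longleftrightarrow> length vs = Suc (length es) \<and> distinct vs \<and> distinct es \<and>
     set es \<subseteq> E \<and> (\<forall>i<length es. vs ! i \<in> es ! i \<and> vs ! Suc i \<in> es ! i)"

definition joins :: "nat set set \<Rightarrow> nat \<Rightarrow> nat \<Rightarrow> nat \<Rightarrow> bool" where
  "joins E u v l \<longleftrightarrow> (\<exists>vs es. is_path E vs es \<and> hd vs = u \<and> last vs = v \<and> length es = l)"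

definition hg_connected :: "nat \<Rightarrow> nat set set \<Rightarrow> bool" where
  "hg_connected n E \<longleftrightarrow> (\<forall>u\<in>{1..n}. \<forall>v\<in>{1..n}. \<exists>l. joins E u v l)"

definition hg_dist :: "nat set set \<Rightarrow> nat \<Rightarrow> nat \<Rightarrow> nat" where
  "hg_dist E u v = (LEAST l. joins E u v l)"

definition ecc :: "nat \<Rightarrow> nat set set \<Rightarrow> nat \<Rightarrow> nat" where
  "ecc n E v = Max {hg_dist E u v | u. u \<in> {1..n}}"

definition lap_form :: "nat \<Rightarrow> nat set set \<Rightarrow> (nat \<Rightarrow> real) \<Rightarrow> real" where
  "lap_form k E x = (\<Sum>e\<in>E. (\<Sum>i\<in>e. x i ^ k) - real k * (\<Prod>i\<in>e. x i))"

text \<open>Inverse Perron value of vertex j (the minimum, written as an infimum).\<close>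
definition inv_perron :: "nat \<Rightarrow> nat \<Rightarrow> nat set set \<Rightarrow> nat \<Rightarrow> real" where
  "inv_perron n k E j = Inf {lap_form k E x | x.
      (\<forall>i\<in>{1..n}. x i \<ge> 0) \<and> (\<Sum>i\<in>{1..n}. x i ^ k) = 1 \<and> x j = 0}"

end

theory Submission
  imports Defs
begin

text \<open>Take an admissible vector x and a vertex u with x_u^k \<ge> 1/(n-1), which exists since the
  coordinates off j carry total mass 1. Along a shortest path from u to j, where x vanishes, each
  edge e with consecutive path vertices a, b contributes at least (x_a^(k/2) - x_b^(k/2))^2 to the
  Laplacian form: this is AM-GM for the k numbers of e after replacing x_a and x_b by their geometric
  mean. Cauchy-Schwarz along the path gives x_u^k \<le> d(u,j) L x^k \<le> ecc(j) L x^k, hence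
  \<alpha>_j \<ge> 1/((n-1) ecc(j)), which is stronger than the claim since k \<le> 2(k-1).\<close>

lemma powr_inverse_power:
  fixes y :: real assumes "y \<ge> 0" "k > 0"
  shows "(y ^ k) powr (1 / k) = y"
  using assms by (cases "y = 0") (simp_all add: powr_powr flip: powr_realpow)

lemma card_mult_prod_le_sum_power:
  fixes c :: "'a \<Rightarrow> real"
  assumes "finite S" "card S = k" "k > 0" "\<And>i. i \<in> S \<Longrightarrow> c i \<ge> 0"
  shows "real k * prod c S \<le> (\<Sum>i\<in>S. c i ^ k)"
proof -
  have "S \<noteq> {}" using assms by auto
  then have "(\<Prod>i\<in>S. c i ^ k) powr (1 / card S) \<le> (\<Sum>i\<in>S. c i ^ k / card S)"
    using assms by (intro arith_geom_mean) auto
  moreover have "(\<Prod>i\<in>S. c i ^ k) powr (1 / k) = prod c S"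
    using assms by (simp add: prod_nonneg powr_inverse_power flip: prod_power_distrib)
  ultimately show ?thesis
    using assms by (simp add: field_simps flip: sum_divide_distrib)
qed

definition edge_defect :: "nat \<Rightarrow> (nat \<Rightarrow> real) \<Rightarrow> nat set \<Rightarrow> real" where
  "edge_defect k x e = (\<Sum>i\<in>e. x i ^ k) - real k * prod x e"

lemma lap_form_eq_sum_edge_defect: "lap_form k E x = (\<Sum>e\<in>E. edge_defect k x e)"
  by (simp add: lap_form_def edge_defect_def)

lemma edge_defect_nonneg:
  assumes "finite e" "card e = k" "k > 0" "\<And>i. i \<in> e \<Longrightarrow> x i \<ge> 0"
  shows "edge_defect k x e \<ge> 0"
  using card_mult_prod_le_sum_power[OF assms] by (simp add: edge_defect_def)

lemma edge_defect_ge_sqrt_diff: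
  fixes x :: "nat \<Rightarrow> real"
  assumes "finite e" "card e = k" "k > 0" "\<And>i. i \<in> e \<Longrightarrow> x i \<ge> 0"
    and "a \<in> e" "b \<in> e" "a \<noteq> b"
  shows "(sqrt (x a ^ k) - sqrt (x b ^ k))\<^sup>2 \<le> edge_defect k x e"
proof -
  define w where "w = sqrt (x a * x b)"
  define c where "c i = (if i = a \<or> i = b then w else x i)" for i
  define R where "R = e - {a, b}"
  have xa: "x a \<ge> 0" and xb: "x b \<ge> 0" using assms by auto
  have e_eq: "e = insert a (insert b R)" and R: "a \<notin> R" "b \<notin> R" "finite R"
    using assms by (auto simp: R_def)
  have c_R: "\<And>i. i \<in> R \<Longrightarrow> c i = x i" by (auto simp: c_def R_def)
  have "prod c e = w * w * prod x R"
    using assms(7) R c_R by (simp add: e_eq c_def cong: prod.cong)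
  also have "\<dots> = prod x e"
    using assms(7) R xa xb by (simp add: e_eq w_def)
  finally have prod_c: "prod c e = prod x e" .
  have sum_c: "(\<Sum>i\<in>e. c i ^ k) = 2 * w ^ k + (\<Sum>i\<in>R. x i ^ k)"
    using assms(7) R c_R by (simp add: e_eq c_def cong: sum.cong)
  have sum_x: "(\<Sum>i\<in>e. x i ^ k) = x a ^ k + x b ^ k + (\<Sum>i\<in>R. x i ^ k)"
    using assms(7) R by (simp add: e_eq)
  have "real k * prod c e \<le> (\<Sum>i\<in>e. c i ^ k)"
    using assms by (intro card_mult_prod_le_sum_power) (auto simp: c_def w_def)
  moreover have "w ^ k = sqrt (x a ^ k) * sqrt (x b ^ k)"
    by (simp add: w_def real_sqrt_mult real_sqrt_power power_mult_distrib)
  then have "(sqrt (x a ^ k) - sqrt (x b ^ k))\<^sup>2 = x a ^ k + x b ^ k - 2 * w ^ k"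
    using xa xb by (simp add: power2_diff)
  ultimately show ?thesis
    using prod_c sum_c sum_x by (simp add: edge_defect_def)
qed

lemma square_diff_le_length_mult_sum:
  fixes f :: "nat \<Rightarrow> real"
  shows "(f 0 - f l)\<^sup>2 \<le> real l * (\<Sum>i<l. (f i - f (Suc i))\<^sup>2)"
proof -
  have "(\<Sum>i<l. (f i - f (Suc i)) * 1)\<^sup>2 \<le> (\<Sum>i<l. (f i - f (Suc i))\<^sup>2) * (\<Sum>i<l. 1\<^sup>2)"
    by (rule Cauchy_Schwarz_ineq_sum)
  then show ?thesis
    by (simp add: sum_lessThan_telescope' mult.commute)
qed

lemma sum_edge_defect_path_le_lap_form:
  assumes "finite E" "is_path E vs es" "\<And>e. e \<in> E \<Longrightarrow> edge_defect k x e \<ge> 0"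
  shows "(\<Sum>i<length es. edge_defect k x (es ! i)) \<le> lap_form k E x"
proof -
  have "(\<Sum>i<length es. edge_defect k x (es ! i)) = (\<Sum>e\<in>set es. edge_defect k x e)"
    using assms(2) unfolding is_path_def
    by (simp add: sum_list_sum_nth atLeast0LessThan flip: sum_list_distinct_conv_sum_set)
  also have "\<dots> \<le> (\<Sum>e\<in>E. edge_defect k x e)"
    using assms unfolding is_path_def by (intro sum_mono2) auto
  finally show ?thesis by (simp add: lap_form_eq_sum_edge_defect)
qed

lemma path_sqrt_diff_le_lap_form:
  fixes x :: "nat \<Rightarrow> real"
  assumes "uniform_hypergraph n k E" "\<And>i. i \<in> {1..n} \<Longrightarrow> x i \<ge> 0"
    and "is_path E vs es"
  shows "(sqrt (x (hd vs) ^ k) - sqrt (x (last vs) ^ k))\<^sup>2 \<le> real (length es) * lap_form k E x"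
proof -
  define l where "l = length es"
  define f where "f i = sqrt (x (vs ! i) ^ k)" for i
  have edges: "\<And>e. e \<in> E \<Longrightarrow> e \<subseteq> {1..n} \<and> card e = k" and "k > 0"
    using assms(1) by (auto simp: uniform_hypergraph_def)
  have finite_edges: "\<And>e. e \<in> E \<Longrightarrow> finite e"
    using edges finite_subset by blast
  have "finite E"
    using edges by (intro finite_subset[of E "Pow {1..n}"]) auto
  have nonneg: "\<And>i e. e \<in> E \<Longrightarrow> i \<in> e \<Longrightarrow> x i \<ge> 0"
    using edges assms(2) by blast
  have "length vs = Suc l" and "vs \<noteq> []"
    using assms(3) by (auto simp: is_path_def l_def)
  then have ends: "f 0 = sqrt (x (hd vs) ^ k)" "f l = sqrt (x (last vs) ^ k)"
    by (simp_all add: f_def hd_conv_nth last_conv_nth)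
  have step: "(f i - f (Suc i))\<^sup>2 \<le> edge_defect k x (es ! i)" if "i < l" for i
  proof -
    have "es ! i \<in> E" "vs ! i \<in> es ! i" "vs ! Suc i \<in> es ! i" "vs ! i \<noteq> vs ! Suc i"
      using assms(3) that by (auto simp: is_path_def l_def nth_eq_iff_index_eq)
    then show ?thesis
      unfolding f_def using edges finite_edges nonneg \<open>k > 0\<close>
      by (intro edge_defect_ge_sqrt_diff) auto
  qed
  have "(f 0 - f l)\<^sup>2 \<le> real l * (\<Sum>i<l. (f i - f (Suc i))\<^sup>2)"
    by (rule square_diff_le_length_mult_sum)
  also have "\<dots> \<le> real l * (\<Sum>i<l. edge_defect k x (es ! i))"
    using step by (intro mult_left_mono sum_mono) auto
  also have "\<dots> \<le> real l * lap_form k E x"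
    using \<open>finite E\<close> assms(3) edges finite_edges nonneg \<open>k > 0\<close> unfolding l_def
    by (intro mult_left_mono sum_edge_defect_path_le_lap_form edge_defect_nonneg) auto
  finally show ?thesis using ends by (simp add: l_def)
qed

lemma joins_hg_dist:
  assumes "hg_connected n E" "u \<in> {1..n}" "v \<in> {1..n}"
  shows "joins E u v (hg_dist E u v)"
  using assms unfolding hg_connected_def hg_dist_def by (meson LeastI_ex)

lemma hg_dist_le_ecc:
  assumes "u \<in> {1..n}"
  shows "hg_dist E u v \<le> ecc n E v"
  unfolding ecc_def using assms by (intro Max_ge) auto

lemma joins_length_pos:
  assumes "joins E u v l" "u \<noteq> v"
  shows "l > 0"
  using assms unfolding joins_def is_path_def
  by (metis gr0I hd_conv_nth last_conv_nth length_0_conv diff_Suc_1 nat.distinct(1))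

lemma exists_ge_inverse_card:
  fixes g :: "'a \<Rightarrow> real"
  assumes "finite S" "S \<noteq> {}" "sum g S = 1"
  obtains u where "u \<in> S" "g u \<ge> 1 / card S"
proof (rule ccontr)
  assume "\<not> thesis"
  then have "\<And>u. u \<in> S \<Longrightarrow> g u < 1 / card S" using that by force
  then have "sum g S < (\<Sum>u\<in>S. 1 / card S)"
    using assms by (intro sum_strict_mono) auto
  then show False using assms by simp
qed

lemma lap_form_ge_inverse_ecc:
  fixes x :: "nat \<Rightarrow> real"
  assumes "uniform_hypergraph n k E" "hg_connected n E" "j \<in> {1..n}" "n \<ge> 2"
    and "\<forall>i\<in>{1..n}. x i \<ge> 0" "(\<Sum>i\<in>{1..n}. x i ^ k) = 1" "x j = 0"
  shows "ecc n E j \<ge> 1" "1 / ((real n - 1) * ecc n E j) \<le> lap_form k E x"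
proof -
  have "k > 0" using assms(1) by (simp add: uniform_hypergraph_def)
  define S where "S = {1..n} - {j}"
  have "finite S" by (simp add: S_def)
  have "(\<Sum>i\<in>S. x i ^ k) = 1"
    using assms(3,6,7) \<open>k > 0\<close> by (simp add: S_def sum.remove zero_power)
  moreover have card_S: "card S = n - 1"
    using assms(3) by (simp add: S_def)
  moreover from this have "S \<noteq> {}"
    using assms(4) by auto
  ultimately obtain u where u_S: "u \<in> S" and "x u ^ k \<ge> 1 / card S"
    using \<open>finite S\<close> by (metis exists_ge_inverse_card)
  with card_S assms(4) have u_large: "x u ^ k \<ge> 1 / (real n - 1)"
    by (simp add: of_nat_diff)
  from u_S have u: "u \<in> {1..n}" "u \<noteq> j" by (auto simp: S_def)
  define l where "l = hg_dist E u j"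
  obtain vs es where path: "is_path E vs es" "hd vs = u" "last vs = j" "length es = l"
    using joins_hg_dist[OF assms(2) u(1) assms(3)] by (auto simp: joins_def l_def)
  have l_le: "l \<le> ecc n E j" using hg_dist_le_ecc[OF u(1)] by (simp add: l_def)
  have "l > 0"
    using joins_length_pos joins_hg_dist[OF assms(2) u(1) assms(3)] u(2) by (simp add: l_def)
  then show ecc_pos: "ecc n E j \<ge> 1" using l_le by simp
  have "0 \<le> lap_form k E x"
    using assms(1,5) \<open>k > 0\<close> unfolding lap_form_eq_sum_edge_defect uniform_hypergraph_def
    by (intro sum_nonneg edge_defect_nonneg) (auto intro: finite_subset)
  have "(sqrt (x u ^ k) - sqrt (x j ^ k))\<^sup>2 \<le> real l * lap_form k E x"
    using path_sqrt_diff_le_lap_form[of n k E x vs es] assms(1,5) path by auto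
  then have "x u ^ k \<le> real l * lap_form k E x"
    using assms(5,7) u(1) \<open>k > 0\<close> by (simp add: zero_power)
  also have "\<dots> \<le> ecc n E j * lap_form k E x"
    using l_le \<open>0 \<le> lap_form k E x\<close> by (intro mult_right_mono) auto
  finally have "1 / (real n - 1) \<le> ecc n E j * lap_form k E x"
    using u_large by linarith
  moreover have "real n - 1 > 0" "real (ecc n E j) > 0"
    using assms(4) ecc_pos by auto
  ultimately show "1 / ((real n - 1) * ecc n E j) \<le> lap_form k E x"
    by (simp add: field_simps)
qed

lemma inv_perron_ge_inverse_ecc:
  assumes "uniform_hypergraph n k E" "hg_connected n E" "j \<in> {1..n}" "n \<ge> 2"
  shows "ecc n E j \<ge> 1" "1 / ((real n - 1) * ecc n E j) \<le> inv_perron n k E j"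
proof -
  define u where "u = (if j = 1 then 2 else 1::nat)"
  have u: "u \<in> {1..n}" "u \<noteq> j" using assms(3,4) by (auto simp: u_def)
  define x :: "nat \<Rightarrow> real" where "x i = (if i = u then 1 else 0)" for i
  have "k > 0" using assms(1) by (simp add: uniform_hypergraph_def)
  then have "(\<Sum>i\<in>{1..n}. x i ^ k) = (\<Sum>i\<in>{1..n}. if i = u then 1 else 0)"
    by (intro sum.cong) (auto simp: x_def)
  then have x: "\<forall>i\<in>{1..n}. x i \<ge> 0" "(\<Sum>i\<in>{1..n}. x i ^ k) = 1" "x j = 0"
    using u by (auto simp: x_def)
  then show "ecc n E j \<ge> 1" by (rule lap_form_ge_inverse_ecc[OF assms])
  show "1 / ((real n - 1) * ecc n E j) \<le> inv_perron n k E j"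
    unfolding inv_perron_def using x lap_form_ge_inverse_ecc(2)[OF assms]
    by (intro cInf_greatest) blast+
qed

theorem theorem3p4:
  fixes n k :: nat and E :: "nat set set" and j :: nat
  assumes "uniform_hypergraph n k E"
    and "hg_connected n E"
    and "j \<in> {1..n}"
  shows "real (ecc n E j) \<ge> real k / (2 * (real k - 1) * (real n - 1) * inv_perron n k E j)"
proof (cases "n \<ge> 2")
  case False
  with assms(3) have "n = 1" by auto
  \<comment> \<open>the denominator is then 0, and division by 0 gives 0\<close>
  then show ?thesis by simp
next
  case True
  define a where "a = inv_perron n k E j"
  have D: "ecc n E j \<ge> 1" and a: "1 / ((real n - 1) * ecc n E j) \<le> a"
    using inv_perron_ge_inverse_ecc[OF assms True] by (simp_all add: a_def)
  have n: "real n - 1 > 0" using True by simp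
  with D have "1 / ((real n - 1) * ecc n E j) > 0" by simp
  with a have "a > 0" by linarith
  have "k \<ge> 2" using assms(1) by (simp add: uniform_hypergraph_def)
  have "real k / (2 * (real k - 1) * (real n - 1) * a)
      = (real k / (2 * (real k - 1))) / ((real n - 1) * a)"
    by simp
  also have "\<dots> \<le> 1 / ((real n - 1) * a)"
    using \<open>k \<ge> 2\<close> n \<open>a > 0\<close> by (intro divide_right_mono) auto
  also have "\<dots> \<le> ecc n E j"
    using a n D \<open>a > 0\<close> by (simp add: field_simps)
  finally show ?thesis by (simp add: a_def)
qed

end
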